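(* Let $\odot$ be a non-degenerate pseudo-multiplication and let $\tau$ be a $\sigma$-maxitive measure on a $\sigma$-algebra $\mathcal{B}$ on a nonempty set $E$ having the Radon–Nikodym property with respect to the idempotent $\odot$-integral. Then $\tau$ has no $\odot$-spot. That is, there is no $B_0\in\mathcal{B}$ such that $\tau(B_0)$ is $\odot$-infinite and, for every $A\in\mathcal{B}$ with $A\subset B_0$, $\tau(A)$ is either $0$ or $\odot$-infinite.
   Context: Write $\overline{\mathbb{R}}_+=[0,\infty]$. A pseudo-multiplication is a binary operation $\odot$ on $\overline{\mathbb{R}}_+$ with the following properties: - it is associative; - it is continuous on $(0,\infty)\times[0,\infty]$; - for every $t$, the map $s\mapsto s\odot t$ is continuous on $(0,\infty]$; - it is nondecreasing in each argument; - it has a left identity $1_\odot$, i.e. $1_\odot\odot t=t$ for all $t$; - it has no zero divisors, i.e. $s\odot t=0$ implies $s=0$ or $t=0$; - $0\odot t=t\odot 0=0$ for all $t$. Put $O(t)=\inf_{s>0}s\odot t$. An element $t$ is $\odot$-finite if $O(t)=0$, and $\odot$-infinite otherwise. The operation $\odot$ is non-degenerate if $1_\odot$ is $\odot$-finite. A $\sigma$-maxitive measure on $\mathcal{B}$ is a map $\nu:\mathcal{B}\to\overline{\mathbb{R}}_+$ with $\nu(\emptyset)=0$ and $\nu(\bigcup_j B_j)=\sup_j\nu(B_j)$ for every countable family. A map $f:E\to\overline{\mathbb{R}}_+$ is $\mathcal{B}$-measurable if $\{f>t\}\in\mathcal{B}$ for all $t\in[0,\infty)$. The idempotent $\odot$-integral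 is $\int^\infty_B f\odot d\tau=\sup_{t\in[0,\infty)}t\odot\tau(B\cap\{f>t\})$. $\nu\ll_\odot\tau$ means $\nu(B)\le\infty\odot\tau(B)$ for every $B\in\mathcal{B}$ with $\tau(B)$ $\odot$-finite. $\tau$ has the Radon–Nikodym property if every $\sigma$-maxitive $\nu\ll_\odot\tau$ admits a $\mathcal{B}$-measurable $c:E\to\overline{\mathbb{R}}_+$ with $\nu(B)=\int^\infty_B c\odot d\tau$ for all $B\in\mathcal{B}$. *)

theory Defs
  imports "HOL-Analysis.Analysis"
begin

text \<open>Values in [0,\<infinity>] are modelled by ennreal. The pseudo-multiplication is
  the operation op with a designated left identity one.\<close>

definition pseudo_mult :: "(ennreal \<Rightarrow> ennreal \<Rightarrow> ennreal) \<Rightarrow> ennreal \<Rightarrow> bool" where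
  "pseudo_mult op one \<longleftrightarrow>
     (\<forall>r s t. op (op r s) t = op r (op s t)) \<and>
     continuous_on ({0<..<\<infinity>} \<times> UNIV) (\<lambda>(s, t). op s t) \<and>
     (\<forall>t. continuous_on {0<..} (\<lambda>s. op s t)) \<and>
     (\<forall>s s' t t'. s \<le> s' \<longrightarrow> t \<le> t' \<longrightarrow> op s t \<le> op s' t') \<and>
     (\<forall>t. op one t = t) \<and>
     (\<forall>s t. op s t = 0 \<longrightarrow> s = 0 \<or> t = 0) \<and>
     (\<forall>t. op 0 t = 0 \<and> op t 0 = 0)"

definition pm_O :: "(ennreal \<Rightarrow> ennreal \<Rightarrow> ennreal) \<Rightarrow> ennreal \<Rightarrow> ennreal" where
  "pm_O op t = (INF s\<in>{0<..}. op s t)"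

definition pm_finite :: "(ennreal \<Rightarrow> ennreal \<Rightarrow> ennreal) \<Rightarrow> ennreal \<Rightarrow> bool" where
  "pm_finite op t \<longleftrightarrow> pm_O op t = 0"

definition pm_infinite :: "(ennreal \<Rightarrow> ennreal \<Rightarrow> ennreal) \<Rightarrow> ennreal \<Rightarrow> bool" where
  "pm_infinite op t \<longleftrightarrow> \<not> pm_finite op t"

definition non_degenerate :: "(ennreal \<Rightarrow> ennreal \<Rightarrow> ennreal) \<Rightarrow> ennreal \<Rightarrow> bool" where
  "non_degenerate op one \<longleftrightarrow> pm_finite op one"

text \<open>sigma-maxitive measure on the sigma-algebra B (countable families are
  represented by sequences; finite families by repetition).\<close>
definition sigma_maxitive :: "'a set set \<Rightarrow> ('a set \<Rightarrow> ennreal) \<Rightarrow> bool" where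
  "sigma_maxitive B nu \<longleftrightarrow> nu {} = 0 \<and>
     (\<forall>Bs :: nat \<Rightarrow> 'a set. range Bs \<subseteq> B \<longrightarrow> nu (\<Union>j. Bs j) = (SUP j. nu (Bs j)))"

definition B_measurable :: "'a set \<Rightarrow> 'a set set \<Rightarrow> ('a \<Rightarrow> ennreal) \<Rightarrow> bool" where
  "B_measurable E B f \<longleftrightarrow> (\<forall>t::ennreal. t < \<infinity> \<longrightarrow> {x\<in>E. f x > t} \<in> B)"

definition idem_integral ::
  "(ennreal \<Rightarrow> ennreal \<Rightarrow> ennreal) \<Rightarrow> 'a set \<Rightarrow> ('a set \<Rightarrow> ennreal) \<Rightarrow> 'a set \<Rightarrow> ('a \<Rightarrow> ennreal) \<Rightarrow> ennreal" where
  "idem_integral op E tau A f = (SUP t\<in>{..<\<infinity>}. op t (tau (A \<inter> {x\<in>E. f x > t})))"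

definition pm_abs_cont ::
  "(ennreal \<Rightarrow> ennreal \<Rightarrow> ennreal) \<Rightarrow> 'a set set \<Rightarrow> ('a set \<Rightarrow> ennreal) \<Rightarrow> ('a set \<Rightarrow> ennreal) \<Rightarrow> bool" where
  "pm_abs_cont op B nu tau \<longleftrightarrow>
     (\<forall>A\<in>B. pm_finite op (tau A) \<longrightarrow> nu A \<le> op \<infinity> (tau A))"

definition radon_nikodym_property ::
  "(ennreal \<Rightarrow> ennreal \<Rightarrow> ennreal) \<Rightarrow> 'a set \<Rightarrow> 'a set set \<Rightarrow> ('a set \<Rightarrow> ennreal) \<Rightarrow> bool" where
  "radon_nikodym_property op E B tau \<longleftrightarrow>
     (\<forall>nu. sigma_maxitive B nu \<and> pm_abs_cont op B nu tau \<longrightarrow>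
        (\<exists>c. B_measurable E B c \<and> (\<forall>A\<in>B. nu A = idem_integral op E tau A c)))"

definition pm_spot ::
  "(ennreal \<Rightarrow> ennreal \<Rightarrow> ennreal) \<Rightarrow> 'a set set \<Rightarrow> ('a set \<Rightarrow> ennreal) \<Rightarrow> 'a set \<Rightarrow> bool" where
  "pm_spot op B tau B0 \<longleftrightarrow> B0 \<in> B \<and> pm_infinite op (tau B0) \<and>
     (\<forall>A\<in>B. A \<subseteq> B0 \<longrightarrow> tau A = 0 \<or> pm_infinite op (tau A))"

end

theory Submission
  imports Defs
begin

text \<open>Suppose B0 is a spot. The set function that is 0 on sets meeting B0 in a
  \<tau>-null set and 1\<odot> otherwise is \<sigma>-maxitive and \<odot>-absolutely
  continuous w.r.t. \<tau>, because inside B0 every set of \<odot>-finite measure is null.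
  Let c be its density. The part of B0 where c vanishes is null, so some level set
  B0 \<inter> {c > t} with t > 0 has nonzero, hence \<odot>-infinite, measure w. But
  t \<odot> w is bounded by the integral over B0, which is 1\<odot>, and
  O(w) \<le> O(t \<odot> w) \<le> O(1\<odot>) = 0 contradicts \<odot>-infiniteness of w.\<close>

lemma sigma_maxitive_mono:
  assumes "sigma_maxitive B tau" "A \<in> B" "A' \<in> B" "A \<subseteq> A'"
  shows "tau A \<le> tau A'"
proof -
  let ?Bs = "\<lambda>j::nat. if j = 0 then A else A'"
  have "range ?Bs \<subseteq> B" using assms(2,3) by auto
  hence "tau (\<Union>j. ?Bs j) = (SUP j. tau (?Bs j))"
    using assms(1) unfolding sigma_maxitive_def by blast
  moreover have "(\<Union>j. ?Bs j) = A'" using assms(4) by (auto split: if_splits)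
  moreover have "tau (?Bs 0) \<le> (SUP j. tau (?Bs j))" by (rule SUP_upper) auto
  ultimately show ?thesis by simp
qed

lemma sigma_maxitive_Union_nonzero:
  fixes As :: "nat \<Rightarrow> 'a set"
  assumes "sigma_maxitive B tau" "range As \<subseteq> B" "tau (\<Union>n. As n) \<noteq> 0"
  obtains n where "tau (As n) \<noteq> 0"
proof (rule ccontr)
  assume "\<not> thesis"
  hence "\<forall>n. tau (As n) = 0" using that by blast
  moreover have "tau (\<Union>n. As n) = (SUP n. tau (As n))"
    using assms(1,2) unfolding sigma_maxitive_def by blast
  ultimately show False using assms(3) by simp
qed

lemma
  assumes "pseudo_mult op one"
  shows pseudo_mult_assoc: "op (op r s) t = op r (op s t)"
    and pseudo_mult_mono: "s \<le> s' \<Longrightarrow> t \<le> t' \<Longrightarrow> op s t \<le> op s' t'"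
    and pseudo_mult_left_one: "op one t = t"
    and pseudo_mult_eq_0_iff: "op s t = 0 \<longleftrightarrow> s = 0 \<or> t = 0"
    and pseudo_mult_zero_left: "op 0 t = 0"
    and pseudo_mult_zero_right: "op t 0 = 0"
  using assms unfolding pseudo_mult_def by auto

lemma pseudo_mult_one_neq_zero:
  assumes "pseudo_mult op one"
  shows "one \<noteq> 0"
  using pseudo_mult_left_one[OF assms, of 1] pseudo_mult_zero_left[OF assms, of 1] by auto

lemma pm_O_mono:
  assumes "pseudo_mult op one" "u \<le> u'"
  shows "pm_O op u \<le> pm_O op u'"
  unfolding pm_O_def by (rule INF_mono) (use pseudo_mult_mono[OF assms(1) order_refl assms(2)] in blast)

lemma pm_finite_mono:
  assumes "pseudo_mult op one" "u \<le> u'" "pm_finite op u'"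
  shows "pm_finite op u"
  using pm_O_mono[OF assms(1,2)] assms(3) unfolding pm_finite_def by simp

lemma pm_finite_zero:
  assumes "pseudo_mult op one"
  shows "pm_finite op 0"
proof -
  have "pm_O op 0 \<le> op 1 0" unfolding pm_O_def by (rule INF_lower) simp
  thus ?thesis unfolding pm_finite_def pseudo_mult_zero_right[OF assms] by simp
qed

text \<open>Since \<odot> has no zero divisors, s \<odot> t is positive for every s > 0.\<close>
lemma pm_O_le_pm_O_mult:
  assumes "pseudo_mult op one" "t > 0"
  shows "pm_O op w \<le> pm_O op (op t w)"
  unfolding pm_O_def
proof (rule INF_greatest)
  fix s :: ennreal assume "s \<in> {0<..}"
  hence "op s t \<in> {0<..}"
    using assms pseudo_mult_eq_0_iff[OF assms(1)] by (auto simp: zero_less_iff_neq_zero)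
  hence "(INF s\<in>{0<..}. op s w) \<le> op (op s t) w" by (rule INF_lower)
  thus "(INF s\<in>{0<..}. op s w) \<le> op s (op t w)" by (simp add: pseudo_mult_assoc[OF assms(1)])
qed

lemma pm_finite_mult_imp_pm_finite:
  assumes "pseudo_mult op one" "t > 0" "pm_finite op (op t w)"
  shows "pm_finite op w"
  using pm_O_le_pm_O_mult[OF assms(1,2), of w] assms(3) unfolding pm_finite_def by simp

lemma idem_integral_vanishing:
  assumes "pseudo_mult op one" "tau {} = 0" "\<And>x. x \<in> A \<inter> E \<Longrightarrow> c x = 0"
  shows "idem_integral op E tau A c = 0"
proof -
  have "A \<inter> {x\<in>E. c x > t} = {}" for t using assms(3) by (auto intro: le_less_trans[OF zero_le])
  then show ?thesis unfolding idem_integral_def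
    using assms(2) pseudo_mult_zero_right[OF assms(1)] by (intro antisym SUP_least) auto
qed

lemma idem_integral_lower:
  assumes "t < \<infinity>"
  shows "op t (tau (A \<inter> {x\<in>E. c x > t})) \<le> idem_integral op E tau A c"
  unfolding idem_integral_def using assms by (intro SUP_upper) auto

lemma ennreal_inverse_Suc_less:
  assumes "(0::ennreal) < x"
  obtains n where "ennreal (inverse (real (Suc n))) < x"
proof (cases x)
  case (real r)
  with assms obtain n where "inverse (real (Suc n)) < r" using reals_Archimedean by auto
  with real that show ?thesis by (metis ennreal_lessI less_trans zero_less_Suc
      of_nat_0_less_iff positive_imp_inverse_positive)
next
  case top
  with that show ?thesis by simp
qed

text \<open>A is the countable union of A - {c > 0} and the level sets A \<inter> {c > 1/(n+1)}.\<close>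
lemma sigma_maxitive_level_set_nonzero:
  assumes "sigma_algebra E B" "sigma_maxitive B tau" "B_measurable E B c"
    and "A \<in> B" "tau A \<noteq> 0" "tau (A - {x\<in>E. c x > 0}) = 0"
  obtains t where "0 < t" "t < \<infinity>" "tau (A \<inter> {x\<in>E. c x > t}) \<noteq> 0"
proof -
  interpret sigma_algebra E B by fact
  define T where "T n = ennreal (inverse (real (Suc n)))" for n
  have T: "0 < T n" "T n < \<infinity>" for n unfolding T_def by auto
  define As where "As n = (if n = 0 then A - {x\<in>E. c x > 0} else A \<inter> {x\<in>E. c x > T (n - 1)})" for n
  have "range As \<subseteq> B"
    using assms(3,4) T unfolding As_def B_measurable_def by auto
  moreover have "(\<Union>n. As n) = A"
  proof (intro equalityI subsetI)
    fix x assume x: "x \<in> A"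
    show "x \<in> (\<Union>n. As n)"
    proof (cases "x \<in> E \<and> c x > 0")
      case True
      then obtain n where "T n < c x" unfolding T_def using ennreal_inverse_Suc_less by blast
      hence "x \<in> As (Suc n)" using x True unfolding As_def by auto
      thus ?thesis by blast
    next
      case False
      hence "x \<in> As 0" using x unfolding As_def by auto
      thus ?thesis by blast
    qed
  qed (auto simp: As_def split: if_splits)
  ultimately obtain n where n: "tau (As n) \<noteq> 0"
    using sigma_maxitive_Union_nonzero[OF assms(2)] assms(5) by metis
  with assms(6) obtain m where "n = Suc m" unfolding As_def by (cases n) auto
  with n T that show ?thesis unfolding As_def by auto
qed

definition support_indicator :: "ennreal \<Rightarrow> ('a set \<Rightarrow> ennreal) \<Rightarrow> 'a set \<Rightarrow> 'a set \<Rightarrow> ennreal" where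
  "support_indicator u tau B0 A = (if tau (A \<inter> B0) = 0 then 0 else u)"

lemma sigma_maxitive_support_indicator:
  assumes "sigma_algebra E B" "sigma_maxitive B tau" "B0 \<in> B"
  shows "sigma_maxitive B (support_indicator u tau B0)"
  unfolding sigma_maxitive_def
proof (intro conjI allI impI)
  interpret sigma_algebra E B by fact
  show "support_indicator u tau B0 {} = 0"
    using assms(2) unfolding sigma_maxitive_def support_indicator_def by simp
  fix As :: "nat \<Rightarrow> 'a set" assume "range As \<subseteq> B"
  hence "range (\<lambda>j. As j \<inter> B0) \<subseteq> B" using assms(3) by auto
  moreover have "(\<Union>j. As j) \<inter> B0 = (\<Union>j. As j \<inter> B0)" by auto
  ultimately have Union: "tau ((\<Union>j. As j) \<inter> B0) = (SUP j. tau (As j \<inter> B0))"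
    using assms(2) unfolding sigma_maxitive_def by (simp only:)
  show "support_indicator u tau B0 (\<Union>j. As j) = (SUP j. support_indicator u tau B0 (As j))"
  proof (cases "\<forall>j. tau (As j \<inter> B0) = 0")
    case True
    then show ?thesis unfolding support_indicator_def Union by simp
  next
    case False
    then obtain j where j: "tau (As j \<inter> B0) \<noteq> 0" by blast
    have "tau (As j \<inter> B0) \<le> tau ((\<Union>j. As j) \<inter> B0)"
      unfolding Union by (rule SUP_upper) simp
    with j have "support_indicator u tau B0 (\<Union>j. As j) = u"
      unfolding support_indicator_def by auto
    moreover have "(SUP j. support_indicator u tau B0 (As j)) = u"
    proof (rule antisym)
      show "(SUP j. support_indicator u tau B0 (As j)) \<le> u"
        by (rule SUP_least) (simp add: support_indicator_def)
      show "u \<le> (SUP j. support_indicator u tau B0 (As j))"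
        using j by (intro SUP_upper2[of j]) (simp_all add: support_indicator_def)
    qed
    ultimately show ?thesis by simp
  qed
qed

lemma pm_abs_cont_support_indicator:
  assumes "pseudo_mult op one" "sigma_algebra E B" "sigma_maxitive B tau" "pm_spot op B tau B0"
  shows "pm_abs_cont op B (support_indicator u tau B0) tau"
  unfolding pm_abs_cont_def
proof (intro ballI impI)
  interpret sigma_algebra E B by fact
  fix A assume A: "A \<in> B" "pm_finite op (tau A)"
  have B0: "B0 \<in> B" "\<And>A. A \<in> B \<Longrightarrow> A \<subseteq> B0 \<Longrightarrow> tau A = 0 \<or> pm_infinite op (tau A)"
    using assms(4) unfolding pm_spot_def by auto
  hence AB0: "A \<inter> B0 \<in> B" using A by auto
  with A have "tau (A \<inter> B0) \<le> tau A" by (intro sigma_maxitive_mono[OF assms(3)]) auto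
  hence "pm_finite op (tau (A \<inter> B0))" using pm_finite_mono[OF assms(1)] A(2) by blast
  hence "tau (A \<inter> B0) = 0" using B0(2)[OF AB0] unfolding pm_infinite_def by auto
  thus "support_indicator u tau B0 A \<le> op \<infinity> (tau A)" by (simp add: support_indicator_def)
qed

lemma support_indicator_density_vanishes_null:
  assumes "pseudo_mult op one" "sigma_algebra E B" "sigma_maxitive B tau"
    and "B0 \<in> B" "B_measurable E B c" "u \<noteq> 0"
    and density: "\<And>A. A \<in> B \<Longrightarrow> support_indicator u tau B0 A = idem_integral op E tau A c"
  shows "tau (B0 - {x\<in>E. c x > 0}) = 0"
proof -
  interpret sigma_algebra E B by fact
  define Z where "Z = B0 - {x\<in>E. c x > 0}"
  have "Z \<in> B" using assms(4,5) unfolding Z_def B_measurable_def by auto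
  moreover have "idem_integral op E tau Z c = 0"
    using assms(3) unfolding Z_def sigma_maxitive_def by (intro idem_integral_vanishing[OF assms(1)]) auto
  ultimately have "tau (Z \<inter> B0) = 0"
    using density assms(6) unfolding support_indicator_def by metis
  moreover have "Z \<inter> B0 = Z" unfolding Z_def by blast
  ultimately show ?thesis unfolding Z_def by simp
qed

theorem mainTheorem7:
  fixes op :: "ennreal \<Rightarrow> ennreal \<Rightarrow> ennreal" and one :: ennreal
    and E :: "'a set" and B :: "'a set set" and tau :: "'a set \<Rightarrow> ennreal"
  assumes "pseudo_mult op one"
    and "non_degenerate op one"
    and "E \<noteq> {}"
    and "sigma_algebra E B"
    and "sigma_maxitive B tau"
    and "radon_nikodym_property op E B tau"
  shows "\<not> (\<exists>B0. pm_spot op B tau B0)"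
proof
  interpret sigma_algebra E B by fact
  assume "\<exists>B0. pm_spot op B tau B0"
  then obtain B0 where spot: "pm_spot op B tau B0" ..
  hence B0: "B0 \<in> B" "tau B0 \<noteq> 0"
    using pm_finite_zero[OF assms(1)] unfolding pm_spot_def pm_infinite_def by auto
  let ?nu = "support_indicator one tau B0"
  obtain c where c: "B_measurable E B c" and density: "\<And>A. A \<in> B \<Longrightarrow> ?nu A = idem_integral op E tau A c"
    using assms(6) sigma_maxitive_support_indicator[OF assms(4,5) B0(1)]
      pm_abs_cont_support_indicator[OF assms(1,4,5) spot]
    unfolding radon_nikodym_property_def by blast
  have "tau (B0 - {x\<in>E. c x > 0}) = 0"
    using support_indicator_density_vanishes_null[OF assms(1,4,5) B0(1) c
        pseudo_mult_one_neq_zero[OF assms(1)] density] .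
  then obtain t where t: "0 < t" "t < \<infinity>" and w: "tau (B0 \<inter> {x\<in>E. c x > t}) \<noteq> 0"
    using sigma_maxitive_level_set_nonzero[OF assms(4,5) c B0] by blast
  have "B0 \<inter> {x\<in>E. c x > t} \<in> B"
    using B0(1) c t(2) unfolding B_measurable_def by auto
  with spot w have "pm_infinite op (tau (B0 \<inter> {x\<in>E. c x > t}))" unfolding pm_spot_def by blast
  moreover have "op t (tau (B0 \<inter> {x\<in>E. c x > t})) \<le> one"
    using idem_integral_lower[OF t(2)] density[OF B0(1)] B0(2) by (simp add: support_indicator_def)
  with assms(2) have "pm_finite op (op t (tau (B0 \<inter> {x\<in>E. c x > t})))"
    using pm_finite_mono[OF assms(1)] unfolding non_degenerate_def by blast
  ultimately show False
    using pm_finite_mult_imp_pm_finite[OF assms(1) t(1)] unfolding pm_infinite_def by blast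
qed

end
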